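(* Under the Gaussian copula model, for any $m\in\mathbb N$, $\alpha\in(0,1]$, $\rho\in(0,1]$ and $\delta\in(0,1]$, there exists $\bar n=\bar n(\alpha,\rho,\delta)<\infty$ such that $$p^{\mathrm{G}}_{\mathrm{success}}(n,m,\alpha,\rho)\ge1-\delta\quad\text{for all } n\ge\bar n.$$
   Context: Ordinal optimisation model: let $(Z_1,X_1),\dots,(Z_n,X_n)$ be i.i.d. copies of a pair $(Z,X)$ of real random variables. Order $Z_1,\dots,Z_n$ increasingly as $Z_{1:n}\le\dots\le Z_{n:n}$ and let $X_{\langle i\rangle}$ denote the $X$-value paired with $Z_{i:n}$. Let $x^*_\alpha$ be the $\alpha$-quantile of $X$. The success probability is $\Pr(\min_{1\le i\le m}X_{\langle i\rangle}\le x^*_\alpha)$. Gaussian copula model with correlation $\rho$: $Z,X$ have continuous marginal CDFs $F_Z,F_X$ and joint CDF $\boldsymbol\Phi_{\rho}(\Phi^{-1}(F_Z(z)),\Phi^{-1}(F_X(x)))$, with $\Phi$ the standard normal CDF and $\boldsymbol\Phi_\rho$ the standard bivariate normal CDF with correlation $\rho$. The success probability in this model is $p^{\mathrm{G}}_{\mathrm{success}}(n,m,\alpha,\rho)$ (defined for $n\ge m$). *)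

theory Defs
  imports "HOL-Probability.Probability"
begin

definition std_normal :: "real measure" where
  "std_normal = density lborel std_normal_density"

definition Phi :: "real \<Rightarrow> real" where
  "Phi x = measure std_normal {..x}"

text \<open>The first component plays the role of Z, the second the role of X.\<close>
definition biv_normal :: "real \<Rightarrow> (real \<times> real) measure" where
  "biv_normal \<rho> = distr (std_normal \<Otimes>\<^sub>M std_normal) (borel \<Otimes>\<^sub>M borel)
     (\<lambda>(u, w). (u, \<rho> * u + sqrt (1 - \<rho>\<^sup>2) * w))"

text \<open>Success event for a sample omega of n pairs (Z_i, X_i), i < n: some sample whose
  Z-value is among the m smallest (i.e. fewer than m Z-values are strictly smaller)
  has X-value at most the alpha-quantile of X, expressed as Phi(X_i) \<le> alpha
  (X is standard normal here).\<close>
definition success_event :: "nat \<Rightarrow> nat \<Rightarrow> real \<Rightarrow> (nat \<Rightarrow> real \<times> real) \<Rightarrow> bool" where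
  "success_event n m \<alpha> \<omega> \<longleftrightarrow>
     (\<exists>i<n. card {j. j < n \<and> fst (\<omega> j) < fst (\<omega> i)} < m \<and> Phi (snd (\<omega> i)) \<le> \<alpha>)"

definition p_success_G :: "nat \<Rightarrow> nat \<Rightarrow> real \<Rightarrow> real \<Rightarrow> real" where
  "p_success_G n m \<alpha> \<rho> =
     measure (PiM {..<n} (\<lambda>_. biv_normal \<rho>))
       {\<omega> \<in> space (PiM {..<n} (\<lambda>_. biv_normal \<rho>)). success_event n m \<alpha> \<omega>}"

end

theory Submission
  imports Defs
begin

text \<open>Fix a level \<open>q\<close> with \<open>\<Phi>(q) \<le> \<alpha>\<close> and a threshold \<open>t\<close> with \<open>\<Phi>(t) = c/n\<close>.
  The sample with the smallest \<open>Z\<close>-value is always among the \<open>m\<close> selected ones, so success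
  can only fail if no \<open>Z\<^sub>i\<close> lies below \<open>t\<close> (probability \<open>(1 - c/n)\<^sup>n \<le> e\<^sup>-\<^sup>c\<close>) or some pair
  has \<open>Z\<^sub>i \<le> t\<close> and \<open>X\<^sub>i > q\<close>. Writing \<open>X = \<rho> Z + \<surd>(1-\<rho>\<^sup>2) W\<close>, the latter forces
  \<open>W > w\<close> for every \<open>0 \<le> w \<le> q - \<rho> t\<close>, so by the union bound it has probability at most
  \<open>n \<Phi>(t) (1 - \<Phi>(w)) = c (1 - \<Phi>(w))\<close>. As \<open>n\<close> grows, \<open>t\<close> decreases and \<open>w\<close> may be taken
  large; choosing \<open>c = ln (2/\<delta>)\<close> makes both error terms at most \<open>\<delta>/2\<close>.\<close>

lemma real_distribution_std_normal: "real_distribution std_normal"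
  unfolding std_normal_def by (rule real_dist_normal_dist)

interpretation std_normal: real_distribution std_normal
  by (rule real_distribution_std_normal)

lemma space_std_normal [simp]: "space std_normal = UNIV"
  by (simp add: std_normal_def)

lemma sets_std_normal [measurable_cong, simp]: "sets std_normal = sets borel"
  by (simp add: std_normal_def)

lemma Phi_eq_cdf: "Phi = cdf std_normal"
  by (simp add: Phi_def cdf_def fun_eq_iff)

lemma Phi_mono: "x \<le> y \<Longrightarrow> Phi x \<le> Phi y"
  unfolding Phi_eq_cdf by (rule std_normal.cdf_nondecreasing)

lemma Phi_le_1: "Phi x \<le> 1"
  unfolding Phi_eq_cdf by (rule std_normal.cdf_bounded_prob)

lemma isCont_Phi: "isCont Phi x"
proof -
  have "{x} \<in> null_sets std_normal"
    using absolutely_continuousI_density[of std_normal_density lborel]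
    by (auto simp: std_normal_def absolutely_continuous_def countable_imp_null_set_lborel)
  then show ?thesis
    unfolding Phi_eq_cdf by (simp add: std_normal.isCont_cdf measure_def null_setsD1)
qed

lemma Phi_pos: "0 < Phi x"
proof (rule ccontr)
  assume "\<not> 0 < Phi x"
  then have "{..x} \<in> null_sets std_normal"
    using measure_nonneg[of std_normal "{..x}"]
    by (simp add: Phi_def std_normal.emeasure_eq_measure null_setsI)
  then have "AE y in lborel. y \<in> {..x} \<longrightarrow> std_normal_density y = 0"
    unfolding std_normal_def by (subst (asm) null_sets_density_iff) auto
  then have "AE y in lborel. y \<notin> {x - 1..x}"
  proof eventually_elim
    case (elim y)
    then show ?case using normal_density_pos[of 1 0 y] by auto
  qed
  then have "emeasure lborel {x - 1..x} = 0"
    by (subst (asm) AE_iff_measurable[of "{x - 1..x}"]) auto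
  then show False by simp
qed

lemma ex_Phi_less: "0 < e \<Longrightarrow> \<exists>x. Phi x < e"
  using order_tendstoD(2)[OF std_normal.cdf_lim_at_bot, of e]
  by (auto simp: Phi_eq_cdf eventually_at_bot_linorder)

lemma ex_Phi_greater:
  assumes "e < 1"
  shows "\<exists>x\<ge>a. e < Phi x"
proof -
  obtain N where "\<forall>x\<ge>N. e < Phi x"
    using order_tendstoD(1)[OF std_normal.cdf_lim_at_top_prob assms]
    by (auto simp: Phi_eq_cdf eventually_at_top_linorder)
  then show ?thesis by (intro exI[of _ "max a N"]) simp
qed

lemma Phi_surj:
  assumes "0 < y" "y < 1"
  obtains t where "Phi t = y"
proof -
  obtain a where a: "Phi a < y" using ex_Phi_less assms(1) by blast
  obtain b where b: "y < Phi b" using ex_Phi_greater assms(2) by blast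
  have "a \<le> b" using a b Phi_mono[of b a] by linarith
  then show ?thesis
    using IVT'[of Phi a y b] a b that
    by (force simp: continuous_at_imp_continuous_on isCont_Phi)
qed

lemma measure_std_normal_greaterThan: "measure std_normal {t<..} = 1 - Phi t"
proof -
  have "{t<..} = space std_normal - {..t}" by auto
  then show ?thesis using std_normal.prob_compl[of "{..t}"] by (simp add: Phi_def)
qed

lemma measure_std_normal_pair_Times:
  assumes "A \<in> sets borel" "B \<in> sets borel"
  shows "measure (std_normal \<Otimes>\<^sub>M std_normal) (A \<times> B) = measure std_normal A * measure std_normal B"
  using assms by (simp add: measure_def std_normal.emeasure_pair_measure_Times enn2real_mult)

lemma biv_normal_map_measurable:
  "(\<lambda>(u, w). (u, \<rho> * u + sqrt (1 - \<rho>\<^sup>2) * w)) \<in> std_normal \<Otimes>\<^sub>M std_normal \<rightarrow>\<^sub>M borel \<Otimes>\<^sub>M borel"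
  by measurable

lemma prob_space_biv_normal: "prob_space (biv_normal \<rho>)"
  unfolding biv_normal_def
  by (intro prob_space.prob_space_distr prob_space_pair biv_normal_map_measurable) unfold_locales

lemma sets_biv_normal [measurable_cong]: "sets (biv_normal \<rho>) = sets (borel \<Otimes>\<^sub>M borel)"
  by (simp add: biv_normal_def)

lemma measure_biv_normal:
  assumes "A \<in> sets (borel \<Otimes>\<^sub>M borel)"
  shows "measure (biv_normal \<rho>) A =
    measure (std_normal \<Otimes>\<^sub>M std_normal) {(u, w). (u, \<rho> * u + sqrt (1 - \<rho>\<^sup>2) * w) \<in> A}"
  unfolding biv_normal_def using assms
  by (subst measure_distr[OF biv_normal_map_measurable])
     (auto simp: space_pair_measure intro!: arg_cong2[where f = measure])

lemma measure_biv_normal_fst_greater: "measure (biv_normal \<rho>) {p. t < fst p} = 1 - Phi t"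
proof -
  have "{p. t < fst p} = {t<..} \<times> (UNIV :: real set)" by auto
  moreover have "{t<..} \<times> (UNIV :: real set) \<in> sets (borel \<Otimes>\<^sub>M borel)" by simp
  moreover have "{(u, w). (u, \<rho> * u + sqrt (1 - \<rho>\<^sup>2) * w) \<in> {t<..} \<times> UNIV} = {t<..} \<times> (UNIV :: real set)"
    by auto
  ultimately show ?thesis
    using std_normal.prob_space
    by (simp add: measure_biv_normal measure_std_normal_pair_Times measure_std_normal_greaterThan)
qed

lemma measure_biv_normal_upper_tail_le:
  assumes "0 \<le> \<rho>" "\<rho> \<le> 1" "0 \<le> w" "w \<le> q - \<rho> * t"
  shows "measure (biv_normal \<rho>) {p. fst p \<le> t \<and> q < snd p} \<le> Phi t * (1 - Phi w)"
proof -
  let ?s = "sqrt (1 - \<rho>\<^sup>2)"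
  have s: "0 \<le> ?s" "?s \<le> 1" using assms(1,2) by (auto simp: power_le_one)
  have "{p. fst p \<le> t \<and> q < snd p} = {..t} \<times> {q<..}" by auto
  moreover have "{..t} \<times> {q<..} \<in> sets (borel \<Otimes>\<^sub>M borel)" by simp
  moreover have "{(u, v). (u, \<rho> * u + ?s * v) \<in> {..t} \<times> {q<..}} \<subseteq> {..t} \<times> {w<..}"
  proof safe
    fix u v :: real assume u: "u \<le> t" and q: "q < \<rho> * u + ?s * v"
    have "\<rho> * u \<le> \<rho> * t" using u assms(1) by (rule mult_left_mono)
    then have "w < ?s * v" using q assms(4) by linarith
    moreover have "?s * v \<le> max 0 v" using s by (cases "v \<le> 0") (auto simp: mult_nonneg_nonpos mult_left_le_one_le)
    ultimately show "w < v" using assms(3) by linarith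
  qed
  then have "measure (std_normal \<Otimes>\<^sub>M std_normal) {(u, v). (u, \<rho> * u + ?s * v) \<in> {..t} \<times> {q<..}}
      \<le> measure (std_normal \<Otimes>\<^sub>M std_normal) ({..t} \<times> {w<..})"
    using prob_space_pair[OF std_normal.prob_space_axioms std_normal.prob_space_axioms]
    by (intro finite_measure.finite_measure_mono prob_space.finite_measure) auto
  ultimately show ?thesis
    by (simp add: measure_biv_normal measure_std_normal_pair_Times measure_std_normal_greaterThan Phi_def)
qed

lemma success_event_if_low_sample:
  assumes "1 \<le> m" "Phi q \<le> \<alpha>" "i < n" "fst (\<omega> i) \<le> t"
    and low_good: "\<forall>j<n. fst (\<omega> j) \<le> t \<longrightarrow> snd (\<omega> j) \<le> q"
  shows "success_event n m \<alpha> \<omega>"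
proof -
  define k where "k = arg_min_on (\<lambda>j. fst (\<omega> j)) {..<n}"
  have ne: "{..<n} \<noteq> {}" using assms(3) by auto
  have k: "k < n" using arg_min_if_finite(1)[OF finite_lessThan ne] unfolding k_def by simp
  have k_min: "fst (\<omega> k) \<le> fst (\<omega> j)" if "j < n" for j
    using arg_min_least[OF finite_lessThan ne] that unfolding k_def by simp
  have "{j. j < n \<and> fst (\<omega> j) < fst (\<omega> k)} = {}" using k_min by force
  then have "card {j. j < n \<and> fst (\<omega> j) < fst (\<omega> k)} < m" using assms(1) by (simp only: card.empty)
  moreover have "snd (\<omega> k) \<le> q"
    using low_good k k_min[OF assms(3)] assms(4) by simp
  then have "Phi (snd (\<omega> k)) \<le> \<alpha>"
    using Phi_mono assms(2) order_trans by blast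
  ultimately show ?thesis using k unfolding success_event_def by blast
qed

text \<open>Counting by a sum rather than by \<open>card\<close> makes the success event visibly measurable.\<close>

lemma success_event_iff_count:
  "success_event n m \<alpha> \<omega> \<longleftrightarrow>
    (\<exists>i\<in>{..<n}. (\<Sum>j<n. if fst (\<omega> j) < fst (\<omega> i) then 1 else 0 :: real) < m \<and> Phi (snd (\<omega> i)) \<le> \<alpha>)"
proof -
  have "(\<Sum>j<n. if fst (\<omega> j) < fst (\<omega> i) then 1 else 0 :: real)
      = card {j. j < n \<and> fst (\<omega> j) < fst (\<omega> i)}" for i
    by (simp add: sum.If_cases Collect_conj_eq lessThan_def Int_commute)
  then show ?thesis unfolding success_event_def by auto
qed

lemma Phi_measurable [measurable]: "Phi \<in> borel_measurable borel"
  by (intro borel_measurable_continuous_onI continuous_at_imp_continuous_on ballI isCont_Phi)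

lemma sets_success_event:
  assumes [measurable_cong]: "sets M = sets (borel \<Otimes>\<^sub>M borel)"
  shows "{\<omega> \<in> space (PiM {..<n} (\<lambda>_. M)). success_event n m \<alpha> \<omega>} \<in> sets (PiM {..<n} (\<lambda>_. M))"
  unfolding success_event_iff_count by measurable

lemma success_probability_ge:
  fixes M :: "(real \<times> real) measure"
  assumes M: "prob_space M" and sets_M [measurable_cong]: "sets M = sets (borel \<Otimes>\<^sub>M borel)"
    and "1 \<le> m" "Phi q \<le> \<alpha>"
  shows "1 - measure M {p. t < fst p} ^ n - n * measure M {p. fst p \<le> t \<and> q < snd p}
    \<le> measure (PiM {..<n} (\<lambda>_. M)) {\<omega> \<in> space (PiM {..<n} (\<lambda>_. M)). success_event n m \<alpha> \<omega>}"
    (is "_ \<le> measure ?P ?Success")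
proof -
  interpret M: prob_space M by (rule M)
  interpret P: finite_product_prob_space "\<lambda>_. M" "{..<n}" by unfold_locales simp
  define High where "High = {p :: real \<times> real. t < fst p}"
  define Bad where "Bad = {p :: real \<times> real. fst p \<le> t \<and> q < snd p}"
  have "High = {t<..} \<times> UNIV" "Bad = {..t} \<times> {q<..}" by (auto simp: High_def Bad_def)
  then have [measurable]: "High \<in> sets M" "Bad \<in> sets M" by simp_all
  define All_high where "All_high = (\<Pi>\<^sub>E i\<in>{..<n}. High)"
  define Some_bad where "Some_bad = (\<Union>i<n. {\<omega> \<in> space ?P. \<omega> i \<in> Bad})"
  have [measurable]: "All_high \<in> sets ?P" "Some_bad \<in> sets ?P" "?Success \<in> sets ?P"
    unfolding All_high_def Some_bad_def by (auto intro!: sets_PiM_I_finite sets_success_event[OF sets_M])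
  have "space ?P - (All_high \<union> Some_bad) \<subseteq> ?Success"
  proof safe
    fix \<omega> assume \<omega>: "\<omega> \<in> space ?P" "\<omega> \<notin> All_high" "\<omega> \<notin> Some_bad"
    then obtain i where "i < n" "fst (\<omega> i) \<le> t"
      by (auto simp: All_high_def High_def space_PiM PiE_iff not_less)
    moreover have "\<forall>j<n. fst (\<omega> j) \<le> t \<longrightarrow> snd (\<omega> j) \<le> q"
      using \<omega> by (auto simp: Some_bad_def Bad_def not_less)
    ultimately show "success_event n m \<alpha> \<omega>" using success_event_if_low_sample assms(3,4) by blast
  qed
  then have "P.prob (space ?P - (All_high \<union> Some_bad)) \<le> P.prob ?Success"
    by (rule P.finite_measure_mono) simp
  then have "1 - P.prob (All_high \<union> Some_bad) \<le> P.prob ?Success"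
    using P.prob_compl[of "All_high \<union> Some_bad"] by simp
  moreover have "P.prob (All_high \<union> Some_bad) \<le> P.prob All_high + P.prob Some_bad"
    by (intro measure_Un_le) auto
  moreover have "P.prob All_high = M.prob High ^ n"
    unfolding All_high_def by (simp add: P.prob_times)
  moreover have "P.prob Some_bad \<le> (\<Sum>i<n. P.prob {\<omega> \<in> space ?P. \<omega> i \<in> Bad})"
    unfolding Some_bad_def by (intro P.finite_measure_subadditive_finite) auto
  moreover have "P.prob {\<omega> \<in> space ?P. \<omega> i \<in> Bad} = M.prob Bad" if "i < n" for i
    using P.emeasure_PiM_Collect_single[of i Bad] that by (simp add: measure_def)
  ultimately show ?thesis unfolding High_def Bad_def by simp
qed

lemma p_success_G_ge:
  assumes "0 \<le> \<rho>" "\<rho> \<le> 1" "0 \<le> w" "w \<le> q - \<rho> * t" "Phi q \<le> \<alpha>" "1 \<le> m"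
  shows "1 - (1 - Phi t) ^ n - n * (Phi t * (1 - Phi w)) \<le> p_success_G n m \<alpha> \<rho>"
proof -
  have "n * measure (biv_normal \<rho>) {p. fst p \<le> t \<and> q < snd p} \<le> n * (Phi t * (1 - Phi w))"
    using measure_biv_normal_upper_tail_le[OF assms(1-4)] by (rule mult_left_mono) simp
  then show ?thesis
    using success_probability_ge[OF prob_space_biv_normal[of \<rho>] sets_biv_normal[of \<rho>] assms(6,5), where t = t and n = n]
    unfolding p_success_G_def measure_biv_normal_fst_greater by linarith
qed

lemma p_success_G_ge_exp:
  assumes "0 < \<rho>" "\<rho> \<le> 1" "0 \<le> w" "Phi q \<le> \<alpha>" "1 \<le> m" "0 < c" "0 < n"
    and n_large: "c / n < Phi ((q - w) / \<rho>)"
  shows "1 - exp (- c) - c * (1 - Phi w) \<le> p_success_G n m \<alpha> \<rho>"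
proof -
  have "0 < c / n" using assms(6,7) by simp
  moreover have "c / n < 1" using n_large Phi_le_1 by (rule less_le_trans)
  ultimately obtain t where t: "Phi t = c / n" by (rule Phi_surj)
  have "t \<le> (q - w) / \<rho>"
    using Phi_mono[of "(q - w) / \<rho>" t] n_large t by (cases "(q - w) / \<rho> \<le> t") auto
  then have "w \<le> q - \<rho> * t" using assms(1) by (simp add: field_simps)
  then have "1 - (1 - c / n) ^ n - c * (1 - Phi w) \<le> p_success_G n m \<alpha> \<rho>"
    using p_success_G_ge[of \<rho> w q t \<alpha> m n] assms(1-5,7) t by simp
  moreover have "(1 - c / n) ^ n \<le> exp (- c)"
    using \<open>c / n < 1\<close> assms(7) by (intro exp_ge_one_minus_x_over_n_power_n) (simp_all add: field_simps)
  ultimately show ?thesis by linarith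
qed

theorem mainTheorem9:
  fixes \<alpha> \<rho> \<delta> :: real
  assumes "0 < \<alpha>" "\<alpha> \<le> 1" "0 < \<rho>" "\<rho> \<le> 1" "0 < \<delta>" "\<delta> \<le> 1"
  shows "\<exists>nbar::nat. \<forall>m::nat. \<forall>n::nat. 1 \<le> m \<longrightarrow> m \<le> n \<longrightarrow> nbar \<le> n \<longrightarrow>
           p_success_G n m \<alpha> \<rho> \<ge> 1 - \<delta>"
proof -
  define c where "c = ln (2 / \<delta>)"
  have c: "0 < c" "exp (- c) = \<delta> / 2"
    using assms(5,6) by (simp_all add: c_def ln_div exp_diff)
  obtain q where q: "Phi q \<le> \<alpha>" using ex_Phi_less[OF assms(1)] less_imp_le by blast
  obtain w where w: "0 \<le> w" "1 - \<delta> / (2 * c) < Phi w"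
    using ex_Phi_greater[of "1 - \<delta> / (2 * c)" 0] assms(5) c(1) by auto
  define nbar where "nbar = nat \<lceil>c / Phi ((q - w) / \<rho>)\<rceil> + 1"
  have "1 - \<delta> \<le> p_success_G n m \<alpha> \<rho>" if "1 \<le> m" "nbar \<le> n" for m n
  proof -
    have "0 < n" "c / Phi ((q - w) / \<rho>) < n" using that(2) unfolding nbar_def by linarith+
    then have "c / n < Phi ((q - w) / \<rho>)" using Phi_pos by (simp add: field_simps)
    then have "1 - exp (- c) - c * (1 - Phi w) \<le> p_success_G n m \<alpha> \<rho>"
      using p_success_G_ge_exp assms(3,4) w(1) q that(1) c(1) \<open>0 < n\<close> by blast
    moreover have "c * (1 - Phi w) \<le> \<delta> / 2"
      using w(2) c(1) by (simp add: field_simps)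
    ultimately show ?thesis using c(2) by linarith
  qed
  then show ?thesis by blast
qed

end
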